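(* Let $r$ be a Hermitian symmetric polynomial in one complex variable with $r(z,\overline z)>0$ for all $z\in\mathbb{C}$ but $\inf_{z\in\mathbb{C}}r(z,\overline z)=0$. Then $r\notin\mathcal{Q}'(1)$.
   Context: $\mathcal{Q}'(1)$: Hermitian symmetric polynomials $r$ in one variable with $r(z,\overline z)\ge0$ for all $z$ for which there exist a Hermitian symmetric polynomial $s\ge0$, not identically $0$, and a holomorphic polynomial mapping $F$ with $rs=\|F\|^2$. *)

theory Defs
  imports Complex_Main "HOL-Computational_Algebra.Polynomial"
begin

text \<open>A polynomial in (z, conj w) in one complex variable is given by its coefficient
  function c, with r(z, conj w) = sum c j k z^j (conj w)^k over the finite support.\<close>

definition hs_support :: "(nat \<Rightarrow> nat \<Rightarrow> complex) \<Rightarrow> (nat \<times> nat) set" where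
  "hs_support c = {(j, k). c j k \<noteq> 0}"

definition hermitian_sym_poly :: "(nat \<Rightarrow> nat \<Rightarrow> complex) \<Rightarrow> bool" where
  "hermitian_sym_poly c \<longleftrightarrow> finite (hs_support c) \<and> (\<forall>j k. c k j = cnj (c j k))"

definition hs_eval :: "(nat \<Rightarrow> nat \<Rightarrow> complex) \<Rightarrow> complex \<Rightarrow> complex \<Rightarrow> complex" where
  "hs_eval c z w = (\<Sum>(j, k)\<in>hs_support c. c j k * z ^ j * cnj w ^ k)"

text \<open>Value on the diagonal r(z, conj z) (real for Hermitian symmetric c).\<close>
definition hs_diag :: "(nat \<Rightarrow> nat \<Rightarrow> complex) \<Rightarrow> complex \<Rightarrow> real" where
  "hs_diag c z = Re (hs_eval c z z)"

text \<open>The class Q'(1). The identity r s = ||F||^2 is the polynomial identity in (z, conj w),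
  i.e. r(z,conj w) s(z,conj w) = sum_i f_i(z) conj(f_i(w)) for all z, w.\<close>
definition Qprime1 :: "(nat \<Rightarrow> nat \<Rightarrow> complex) \<Rightarrow> bool" where
  "Qprime1 r \<longleftrightarrow> hermitian_sym_poly r \<and> (\<forall>z. hs_diag r z \<ge> 0) \<and>
     (\<exists>s (F :: complex poly list).
        hermitian_sym_poly s \<and> (\<forall>z. hs_diag s z \<ge> 0) \<and> (\<exists>j k. s j k \<noteq> 0) \<and>
        (\<forall>z w. hs_eval r z w * hs_eval s z w = (\<Sum>f\<leftarrow>F. poly f z * cnj (poly f w))))"

end

theory Submission
  imports Defs "HOL-Analysis.Analysis"
begin

text \<open>If \<open>r s = \<parallel>F\<parallel>^2\<close>, Cauchy-Schwarz for \<open>\<Sum>\<^sub>i f\<^sub>i(z) conj (f\<^sub>i(w))\<close> gives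
  \<open>|r(z,conj w) s(z,conj w)|^2 \<le> r(z,conj z) s(z,conj z) r(w,conj w) s(w,conj w)\<close>.
  Let \<open>b\<close> be the degree of \<open>s\<close> in \<open>z\<close> and fix \<open>w\<close> such that \<open>s(\<cdot>,conj w)\<close> still has
  degree \<open>b\<close>. Then \<open>|r(z,conj w) s(z,conj w)|\<close> grows at least like \<open>|z|^b\<close>, while
  \<open>s(z,conj z) = O(|z|^(2b))\<close>, so \<open>r(z,conj z)\<close> stays away from \<open>0\<close> near infinity; on a large
  disc it does so by compactness and positivity, contradicting \<open>inf r = 0\<close>.\<close>

lemma hermitian_sym_polyD:
  assumes "hermitian_sym_poly c"
  shows "cnj (c j k) = c k j"
  using assms unfolding hermitian_sym_poly_def by (metis complex_cnj_cnj)

lemma hs_support_swap: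
  assumes "hermitian_sym_poly c"
  shows "prod.swap ` hs_support c = hs_support c"
proof -
  have "(k, j) \<in> hs_support c \<longleftrightarrow> (j, k) \<in> hs_support c" for j k
    using hermitian_sym_polyD[OF assms, of j k, symmetric] by (auto simp: hs_support_def)
  then have "p \<in> hs_support c \<longleftrightarrow> prod.swap p \<in> hs_support c" for p
    by (cases p) simp
  then show ?thesis
    by (metis (no_types, lifting) image_iff swap_swap subsetI subset_antisym)
qed

lemma hs_eval_cnj:
  assumes "hermitian_sym_poly c"
  shows "hs_eval c z w = cnj (hs_eval c w z)"
proof -
  let ?t = "\<lambda>(j, k). c j k * z ^ j * cnj w ^ k"
  have "cnj (hs_eval c w z) = (\<Sum>p\<in>hs_support c. ?t (prod.swap p))"
    unfolding hs_eval_def cnj_sum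
    by (intro sum.cong) (auto simp: hermitian_sym_polyD[OF assms])
  also have "\<dots> = (\<Sum>p\<in>prod.swap ` hs_support c. ?t p)"
    by (subst sum.reindex) (auto simp: comp_def)
  also have "\<dots> = hs_eval c z w"
    unfolding hs_eval_def hs_support_swap[OF assms] ..
  finally show ?thesis by simp
qed

lemma hs_eval_diag:
  assumes "hermitian_sym_poly c"
  shows "hs_eval c z z = complex_of_real (hs_diag c z)"
proof -
  have "Im (hs_eval c z z) = 0"
    using hs_eval_cnj[OF assms, of z z] by (metis Reals_cnj_iff complex_is_Real_iff)
  then show ?thesis
    unfolding hs_diag_def by (simp add: complex_eq_iff)
qed

lemma continuous_on_hs_diag: "continuous_on A (hs_diag c)"
  unfolding hs_diag_def hs_eval_def by (auto intro!: continuous_intros simp: case_prod_beta)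

lemma hs_diag_le_power:
  assumes "hermitian_sym_poly c" and "\<And>j k. c j k \<noteq> 0 \<Longrightarrow> j \<le> b" and "norm z \<ge> 1"
  shows "hs_diag c z \<le> (\<Sum>(j, k)\<in>hs_support c. norm (c j k)) * norm z ^ (2 * b)"
proof -
  have "hs_diag c z \<le> norm (hs_eval c z z)"
    unfolding hs_diag_def by (rule complex_Re_le_cmod)
  also have "\<dots> \<le> (\<Sum>(j, k)\<in>hs_support c. norm (c j k * z ^ j * cnj z ^ k))"
    unfolding hs_eval_def by (rule order_trans[OF norm_sum]) (simp add: case_prod_beta)
  also have "\<dots> \<le> (\<Sum>(j, k)\<in>hs_support c. norm (c j k) * norm z ^ (2 * b))"
  proof (intro sum_mono, clarify)
    fix j k assume "(j, k) \<in> hs_support c"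
    then have "c j k \<noteq> 0" "c k j \<noteq> 0"
      using hermitian_sym_polyD[OF assms(1), of j k, symmetric] by (auto simp: hs_support_def)
    then have "norm z ^ (j + k) \<le> norm z ^ (2 * b)"
      using assms(2,3) by (intro power_increasing) (auto simp: mult_2 add_mono)
    then show "norm (c j k * z ^ j * cnj z ^ k) \<le> norm (c j k) * norm z ^ (2 * b)"
      by (simp add: norm_mult norm_power power_add mult.assoc mult_left_mono)
  qed
  also have "\<dots> = (\<Sum>(j, k)\<in>hs_support c. norm (c j k)) * norm z ^ (2 * b)"
    by (simp add: sum_distrib_right case_prod_beta)
  finally show ?thesis .
qed

definition hs_slice :: "(nat \<Rightarrow> nat \<Rightarrow> complex) \<Rightarrow> complex \<Rightarrow> complex poly" where
  "hs_slice c w = (\<Sum>(j, k)\<in>hs_support c. monom (c j k * cnj w ^ k) j)"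

lemma poly_hs_slice: "poly (hs_slice c w) z = hs_eval c z w"
  unfolding hs_slice_def hs_eval_def by (simp add: poly_sum case_prod_beta poly_monom mult_ac)

lemma coeff_hs_slice:
  "coeff (hs_slice c w) b = (\<Sum>(j, k)\<in>hs_support c. if j = b then c j k * cnj w ^ k else 0)"
  unfolding hs_slice_def by (simp add: coeff_sum coeff_monom case_prod_beta)

lemma exists_coeff_hs_slice_nonzero:
  assumes "finite (hs_support c)" and "(b, k\<^sub>0) \<in> hs_support c"
  shows "\<exists>w. coeff (hs_slice c w) b \<noteq> 0"
proof -
  define Q where "Q = (\<Sum>(j, k)\<in>hs_support c. if j = b then monom (c j k) k else 0)"
  have "coeff Q k\<^sub>0 = (\<Sum>p\<in>hs_support c. if p = (b, k\<^sub>0) then c b k\<^sub>0 else 0)"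
    unfolding Q_def by (auto simp: coeff_sum case_prod_beta coeff_monom intro!: sum.cong)
  also have "\<dots> = c b k\<^sub>0"
    using assms by simp
  finally have "Q \<noteq> 0"
    using assms(2) by (auto simp: hs_support_def)
  then obtain x where x: "poly Q x \<noteq> 0"
    using poly_all_0_iff_0 by blast
  have "coeff (hs_slice c (cnj x)) b = poly Q x"
    unfolding coeff_hs_slice Q_def
    by (auto simp: poly_sum case_prod_beta poly_monom intro!: sum.cong)
  with x show ?thesis by metis
qed

lemma sum_list_mult_cnj_norm_sq_le:
  fixes F :: "complex poly list"
  shows "norm (\<Sum>f\<leftarrow>F. poly f z * cnj (poly f w))^2 \<le>
    (\<Sum>f\<leftarrow>F. norm (poly f z)^2) * (\<Sum>f\<leftarrow>F. norm (poly f w)^2)"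
proof -
  let ?I = "{..<length F}" and ?a = "\<lambda>x i. norm (poly (F ! i) x)"
  have "norm (\<Sum>i\<in>?I. poly (F ! i) z * cnj (poly (F ! i) w)) \<le> (\<Sum>i\<in>?I. ?a z i * ?a w i)"
    by (rule order_trans[OF norm_sum]) (simp add: norm_mult)
  then have "norm (\<Sum>i\<in>?I. poly (F ! i) z * cnj (poly (F ! i) w))^2 \<le> (\<Sum>i\<in>?I. ?a z i * ?a w i)^2"
    by (intro power_mono) auto
  also have "\<dots> \<le> (\<Sum>i\<in>?I. (?a z i)^2) * (\<Sum>i\<in>?I. (?a w i)^2)"
    by (rule Cauchy_Schwarz_ineq_sum)
  finally show ?thesis
    by (simp add: sum_list_sum_nth atLeast0LessThan)
qed

lemma hs_eval_mult_norm_sq_le: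
  assumes "hermitian_sym_poly r" "hermitian_sym_poly s"
    and "\<forall>z w. hs_eval r z w * hs_eval s z w = (\<Sum>f\<leftarrow>F. poly f z * cnj (poly f w))"
  shows "norm (hs_eval r z w * hs_eval s z w)^2 \<le>
    (hs_diag r z * hs_diag s z) * (hs_diag r w * hs_diag s w)"
proof -
  have diag: "hs_diag r x * hs_diag s x = (\<Sum>f\<leftarrow>F. norm (poly f x)^2)" for x
  proof -
    have "complex_of_real (hs_diag r x * hs_diag s x) = (\<Sum>f\<leftarrow>F. poly f x * cnj (poly f x))"
      using assms(3) hs_eval_diag[OF assms(1)] hs_eval_diag[OF assms(2)] by (metis of_real_mult)
    also have "\<dots> = complex_of_real (\<Sum>f\<leftarrow>F. norm (poly f x)^2)"
      by (induct F) (auto simp flip: of_real_power simp: complex_norm_square)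
    finally show ?thesis
      using of_real_eq_iff by blast
  qed
  show ?thesis
    using sum_list_mult_cnj_norm_sq_le[where F = F and z = z and w = w] assms(3) by (simp add: diag)
qed

lemma poly_bounded_below_at_infinity:
  fixes P :: "'a::real_normed_field poly"
  assumes "P \<noteq> 0"
  shows "\<exists>c>0. \<forall>\<^sub>F z in at_infinity. c * norm z ^ degree P \<le> norm (poly P z)"
proof (intro exI conjI)
  let ?l = "lead_coeff P"
  show "norm ?l / 2 > 0"
    using assms by simp
  have "\<forall>\<^sub>F z in at_infinity. dist (poly P z / z ^ degree P) ?l < norm ?l / 2"
    using assms by (intro tendstoD[OF poly_divide_tendsto_aux]) auto
  moreover have "\<forall>\<^sub>F z in at_infinity. z \<noteq> (0::'a)"
    by (rule eventually_at_infinity[THEN iffD2]) (auto intro: exI[of _ 1])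
  ultimately show "\<forall>\<^sub>F z in at_infinity. norm ?l / 2 * norm z ^ degree P \<le> norm (poly P z)"
  proof eventually_elim
    case (elim z)
    have "norm ?l - norm (poly P z / z ^ degree P) \<le> dist (poly P z / z ^ degree P) ?l"
      by (metis dist_norm norm_minus_commute norm_triangle_ineq2)
    with elim have "norm ?l / 2 \<le> norm (poly P z) / norm z ^ degree P"
      by (simp add: norm_divide norm_power)
    with elim show ?case
      by (simp add: field_simps)
  qed
qed

lemma positive_bounded_below_if_eventually_bounded_below:
  fixes f :: "'a::{real_normed_vector, heine_borel} \<Rightarrow> real"
  assumes "continuous_on UNIV f" and "\<And>z. f z > 0"
    and "\<epsilon> > 0" and "\<forall>\<^sub>F z in at_infinity. \<epsilon> \<le> f z"
  shows "\<exists>\<delta>>0. \<forall>z. \<delta> \<le> f z"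
proof -
  obtain R where R: "\<And>z. norm z \<ge> R \<Longrightarrow> \<epsilon> \<le> f z"
    using assms(4) unfolding eventually_at_infinity by blast
  obtain z\<^sub>m where z\<^sub>m: "\<And>z. z \<in> cball 0 \<bar>R\<bar> \<Longrightarrow> f z\<^sub>m \<le> f z"
    using continuous_attains_inf[OF compact_cball _ continuous_on_subset[OF assms(1)]]
    by (metis abs_ge_zero cball_eq_empty not_less subset_UNIV)
  then have "min \<epsilon> (f z\<^sub>m) \<le> f z" for z
    using R[of z] z\<^sub>m[of z] by (cases "norm z \<ge> R") (auto intro: min.coboundedI1 min.coboundedI2)
  with assms(2,3) show ?thesis
    by (metis min_less_iff_conj)
qed



lemma hs_support_top_row:
  assumes "finite (hs_support c)" and "\<exists>j k. c j k \<noteq> 0"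
  obtains b k\<^sub>0 where "(b, k\<^sub>0) \<in> hs_support c" and "\<And>j k. c j k \<noteq> 0 \<Longrightarrow> j \<le> b"
proof -
  let ?b = "Max (fst ` hs_support c)"
  have "hs_support c \<noteq> {}"
    using assms(2) by (auto simp: hs_support_def)
  then have "?b \<in> fst ` hs_support c"
    using assms(1) by (intro Max_in) auto
  moreover have "j \<le> ?b" if "c j k \<noteq> 0" for j k
    using that assms(1) by (intro Max_ge) (auto simp: hs_support_def image_iff)
  ultimately show ?thesis
    using that by force
qed

lemma hs_diag_bounded_below_at_infinity:
  assumes r: "hermitian_sym_poly r" and r_pos: "\<forall>z. hs_diag r z > 0"
    and s: "hermitian_sym_poly s" and s_nonneg: "\<forall>z. hs_diag s z \<ge> 0" and "\<exists>j k. s j k \<noteq> 0"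
    and factor: "\<forall>z w. hs_eval r z w * hs_eval s z w = (\<Sum>f\<leftarrow>F. poly f z * cnj (poly f w))"
  shows "\<exists>\<epsilon>>0. \<forall>\<^sub>F z in at_infinity. \<epsilon> \<le> hs_diag r z"
proof -
  have fin: "finite (hs_support s)"
    using s by (simp add: hermitian_sym_poly_def)
  obtain b k\<^sub>0 where "(b, k\<^sub>0) \<in> hs_support s" and b_max: "\<And>j k. s j k \<noteq> 0 \<Longrightarrow> j \<le> b"
    using hs_support_top_row[OF fin] assms(5) by metis
  then obtain w where top: "coeff (hs_slice s w) b \<noteq> 0"
    using exists_coeff_hs_slice_nonzero[OF fin] by metis
  define P where "P = hs_slice r w * hs_slice s w"
  have "poly (hs_slice r w) w \<noteq> 0"
    using r_pos[rule_format, of w] by (simp add: poly_hs_slice hs_eval_diag[OF r])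
  then have "hs_slice r w \<noteq> 0" and "hs_slice s w \<noteq> 0"
    using top by auto
  then have "P \<noteq> 0" and "b \<le> degree P"
    using le_degree[OF top] by (auto simp: P_def degree_mult_eq)
  then obtain c where "c > 0" and growth: "\<forall>\<^sub>F z in at_infinity. c * norm z ^ degree P \<le> norm (poly P z)"
    using poly_bounded_below_at_infinity by blast
  define K where "K = hs_diag r w * hs_diag s w"
  define C where "C = (\<Sum>(j, k)\<in>hs_support s. norm (s j k))"
  have "\<forall>\<^sub>F z in at_infinity. norm z \<ge> (1::real)"
    by (simp add: eventually_at_infinity) blast
  with growth have bound: "\<forall>\<^sub>F z in at_infinity. c^2 \<le> hs_diag r z * (C * K)"
  proof eventually_elim
    case (elim z)
    define t where "t = norm z ^ b"
    have "t > 0"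
      using elim(2) unfolding t_def by (intro zero_less_power) linarith
    have "c * t \<le> norm (poly P z)"
      using elim \<open>c > 0\<close> \<open>b \<le> degree P\<close>
      by (smt (verit, best) mult_left_mono power_increasing t_def)
    then have "(c * t)^2 \<le> norm (hs_eval r z w * hs_eval s z w)^2"
      using \<open>c > 0\<close> \<open>t > 0\<close> by (intro power_mono) (auto simp: P_def poly_hs_slice)
    also have "\<dots> \<le> hs_diag r z * hs_diag s z * K"
      unfolding K_def by (rule hs_eval_mult_norm_sq_le[OF r s factor])
    also have "\<dots> \<le> hs_diag r z * (C * t^2) * K"
    proof -
      have "hs_diag s z \<le> C * t^2"
        using hs_diag_le_power[OF s b_max] elim by (simp add: C_def t_def power_mult mult.commute)
      moreover have "K \<ge> 0"
        using r_pos s_nonneg by (simp add: K_def less_imp_le)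
      ultimately show ?thesis
        using r_pos by (intro mult_right_mono mult_left_mono) (auto simp: less_imp_le)
    qed
    finally have "c^2 * t^2 \<le> hs_diag r z * (C * K) * t^2"
      by (simp add: power_mult_distrib mult_ac)
    with \<open>t > 0\<close> show ?case
      by simp
  qed
  have "C * K > 0"
  proof -
    obtain z where "c^2 \<le> hs_diag r z * (C * K)"
      using eventually_happens'[OF trivial_limit_at_infinity bound] by blast
    with \<open>c > 0\<close> r_pos show ?thesis
      by (smt (verit) mult_nonneg_nonpos zero_less_power)
  qed
  have "\<forall>\<^sub>F z in at_infinity. c^2 / (C * K) \<le> hs_diag r z"
    using bound by eventually_elim (simp add: \<open>C * K > 0\<close> pos_divide_le_eq)
  with \<open>c > 0\<close> \<open>C * K > 0\<close> show ?thesis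
    by (metis divide_pos_pos zero_less_power)
qed

theorem corollary4p4:
  fixes r :: "nat \<Rightarrow> nat \<Rightarrow> complex"
  assumes "hermitian_sym_poly r"
    and "\<forall>z. hs_diag r z > 0"
    and "(INF z. hs_diag r z) = 0"
  shows "\<not> Qprime1 r"
proof
  assume "Qprime1 r"
  then obtain s and F :: "complex poly list"
    where "hermitian_sym_poly s" "\<forall>z. hs_diag s z \<ge> 0" "\<exists>j k. s j k \<noteq> 0"
      and "\<forall>z w. hs_eval r z w * hs_eval s z w = (\<Sum>f\<leftarrow>F. poly f z * cnj (poly f w))"
    unfolding Qprime1_def by blast
  then obtain \<epsilon> where "\<epsilon> > 0" "\<forall>\<^sub>F z in at_infinity. \<epsilon> \<le> hs_diag r z"
    using hs_diag_bounded_below_at_infinity[OF assms(1,2)] by blast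
  then obtain \<delta> where "\<delta> > 0" "\<forall>z. \<delta> \<le> hs_diag r z"
    using positive_bounded_below_if_eventually_bounded_below[OF continuous_on_hs_diag] assms(2)
    by blast
  then have "\<delta> \<le> (INF z. hs_diag r z)"
    by (intro cINF_greatest) auto
  with \<open>\<delta> > 0\<close> assms(3) show False
    by simp
qed

end
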